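(* Let $X,Y\in L^\infty$ and $k,b\in\mathbb{K}$. Then (a) $\mathbb{E}[kX+b]=k\,\mathbb{E}[X]+b$; (b) $\mathbb{E}[X+Y]\subseteq \mathbb{E}[X]+\mathbb{E}[Y]=\{a+c: a\in\mathbb{E}[X],\,c\in\mathbb{E}[Y]\}$, with equality when $X$ and $Y$ are independent; (c) if $X$ and $Y$ are independent, then $\mathbb{E}[XY]=\mathbb{E}[X]\,\mathbb{E}[Y]=\{ac: a\in\mathbb{E}[X],\,c\in\mathbb{E}[Y]\}$.
   Context: $\mathbb{K}$ is a local field with non-archimedean absolute value $|\cdot|$ satisfying $|x|=0 \iff x=0$, $|xy|=|x||y|$ and $|x+y|\le |x|\vee|y|$. $(\Omega,\mathcal{F},\mathbb{P})$ is a probability space; random variables equal a.s. are identified. $L^\infty$ is the space of $\mathbb{K}$-valued random variables $X$ with $\|X\|_\infty:=\operatorname{ess\,sup}|X|<\infty$. For $X\in L^\infty$, $\varepsilon(X):=\inf\{\|X-c\|_\infty : c\in\mathbb{K}\}$ and $\mathbb{E}[X]:=\{c\in\mathbb{K} : \|X-c\|_\infty=\varepsilon(X)\}$. *)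

theory Defs
  imports "HOL-Probability.Probability"
begin

definition nonarch_abs :: "('k::field \<Rightarrow> real) \<Rightarrow> bool" where
  "nonarch_abs av \<longleftrightarrow>
     (\<forall>x. 0 \<le> av x) \<and> (\<forall>x. av x = 0 \<longleftrightarrow> x = 0) \<and>
     (\<forall>x y. av (x * y) = av x * av y) \<and>
     (\<forall>x y. av (x + y) \<le> max (av x) (av y))"

text \<open>Non-archimedean local field: the metric d(x,y) = av(x - y) is non-discrete
  (av non-trivial), complete, and the closed unit ball is totally bounded
  (hence compact, so the field is locally compact).\<close>
definition nonarch_local_field :: "('k::field \<Rightarrow> real) \<Rightarrow> bool" where
  "nonarch_local_field av \<longleftrightarrow>
     nonarch_abs av \<and>
     (\<exists>x. av x \<noteq> 0 \<and> av x \<noteq> 1) \<and>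
     (\<forall>s::nat \<Rightarrow> 'k. (\<forall>e>0. \<exists>N. \<forall>m\<ge>N. \<forall>n\<ge>N. av (s m - s n) < e) \<longrightarrow>
        (\<exists>l. \<forall>e>0. \<exists>N. \<forall>n\<ge>N. av (s n - l) < e)) \<and>
     (\<forall>e>0. \<exists>F. finite F \<and> {x. av x \<le> 1} \<subseteq> (\<Union>c\<in>F. {x. av (x - c) < e}))"

text \<open>Borel sigma-algebra of the metric topology (generated by open balls).\<close>
definition Kborel :: "('k::field \<Rightarrow> real) \<Rightarrow> 'k measure" where
  "Kborel av = sigma UNIV (range (\<lambda>(c, r). {x. av (x - c) < r}))"

definition norm_inf :: "'a measure \<Rightarrow> ('k::field \<Rightarrow> real) \<Rightarrow> ('a \<Rightarrow> 'k) \<Rightarrow> ereal" where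
  "norm_inf M av X = esssup M (\<lambda>\<omega>. ereal (av (X \<omega>)))"

definition Linf :: "'a measure \<Rightarrow> ('k::field \<Rightarrow> real) \<Rightarrow> ('a \<Rightarrow> 'k) set" where
  "Linf M av = {X. X \<in> measurable M (Kborel av) \<and> norm_inf M av X < \<infinity>}"

definition eps_dev :: "'a measure \<Rightarrow> ('k::field \<Rightarrow> real) \<Rightarrow> ('a \<Rightarrow> 'k) \<Rightarrow> ereal" where
  "eps_dev M av X = (INF c. norm_inf M av (\<lambda>\<omega>. X \<omega> - c))"

definition EK :: "'a measure \<Rightarrow> ('k::field \<Rightarrow> real) \<Rightarrow> ('a \<Rightarrow> 'k) \<Rightarrow> 'k set" where
  "EK M av X = {c. norm_inf M av (\<lambda>\<omega>. X \<omega> - c) = eps_dev M av X}"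

end

theory Submission
  imports Defs
begin

text \<open>
  In an ultrametric field every point of a closed ball is a centre of it. For a bounded
  random variable \<open>X\<close> the function \<open>e \<mapsto> \<parallel>X - e\<parallel>\<^sub>\<infinity>\<close> satisfies
  \<open>|e - e'| \<le> max \<parallel>X - e\<parallel>\<^sub>\<infinity> \<parallel>X - e'\<parallel>\<^sub>\<infinity>\<close>, so \<open>\<bbbE>[X]\<close> is the closed ball of radius
  \<open>\<epsilon>(X)\<close> around any of its points; it is non-empty because the values of the absolute
  value are discrete away from 0 and the field is complete. Affine maps move this ball in the
  obvious way, and \<open>\<parallel>X + Y - (a + c)\<parallel>\<^sub>\<infinity> \<le> max \<parallel>X - a\<parallel>\<^sub>\<infinity> \<parallel>Y - c\<parallel>\<^sub>\<infinity>\<close> puts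
  \<open>\<bbbE>[X + Y]\<close> inside \<open>\<bbbE>[X] + \<bbbE>[Y]\<close>.

  For independent \<open>X\<close> and \<open>Y\<close>, an event of positive probability on which \<open>|X - u| \<ge> \<epsilon>(X)\<close>
  meets one on which \<open>Y\<close> is close to a fixed point \<open>g\<close>. By the strict triangle inequality
  this gives \<open>\<epsilon>(X + Y) \<ge> max \<epsilon>(X) \<epsilon>(Y)\<close> and
  \<open>\<epsilon>(XY) \<ge> max (\<epsilon>(X) \<parallel>Y\<parallel>\<^sub>\<infinity>) (\<parallel>X\<parallel>\<^sub>\<infinity> \<epsilon>(Y))\<close>; the matching upper bounds identify
  \<open>\<bbbE>[X + Y]\<close> and \<open>\<bbbE>[XY]\<close> with the sum and the product of the balls \<open>\<bbbE>[X]\<close> and \<open>\<bbbE>[Y]\<close>.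
\<close>

section \<open>Ultrametric absolute values\<close>

locale nonarch_av =
  fixes av :: "'k::field \<Rightarrow> real"
  assumes nonarch_abs: "nonarch_abs av"
begin

lemma av_nonneg [simp]: "0 \<le> av x"
  and av_eq_0_iff [simp]: "av x = 0 \<longleftrightarrow> x = 0"
  and av_mult: "av (x * y) = av x * av y"
  and av_add_le_max: "av (x + y) \<le> max (av x) (av y)"
  using nonarch_abs unfolding nonarch_abs_def by auto

lemma av_0 [simp]: "av 0 = 0"
  by simp

lemma av_pos: "x \<noteq> 0 \<Longrightarrow> 0 < av x"
  using av_nonneg[of x] av_eq_0_iff[of x] by linarith

lemma av_1 [simp]: "av 1 = 1"
  using av_mult[of 1 1] by simp

lemma av_minus [simp]: "av (- x) = av x"
proof -
  have "av (-1) ^ 2 = 1"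
    using av_mult[of "-1" "-1"] by (simp add: power2_eq_square)
  then have "av (-1) = 1"
    using av_nonneg[of "-1"] by (auto simp: power2_eq_1_iff)
  then show ?thesis
    using av_mult[of "-1" x] by simp
qed

lemma av_minus_commute: "av (x - y) = av (y - x)"
  by (metis av_minus minus_diff_eq)

lemma av_diff_le_max: "av (x - z) \<le> max (av (x - y)) (av (y - z))"
  using av_add_le_max[of "x - y" "y - z"] by simp

lemma av_add_eq_of_less: "av y < av x \<Longrightarrow> av (x + y) = av x"
  using av_add_le_max[of x y] av_add_le_max[of "x + y" "- y"] by auto

lemma av_diff_eq_max:
  assumes "av x \<noteq> av y" shows "av (x - y) = max (av x) (av y)"
proof (cases "av y < av x")
  case True
  then show ?thesis
    using av_add_eq_of_less[of "- y" x] by simp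
next
  case False
  then have "av x < av y" using assms by simp
  then show ?thesis
    using av_add_eq_of_less[of x "- y"] by (simp add: av_minus_commute[of x])
qed

lemma av_inverse: "av (inverse x) = inverse (av x)"
proof (cases "x = 0")
  case False
  then show ?thesis
    using av_mult[of x "inverse x"] by (simp add: inverse_unique)
qed simp

lemma av_divide: "av (x / y) = av x / av y"
  by (simp add: divide_inverse av_mult av_inverse)

lemma av_power: "av (x ^ n) = av x ^ n"
  by (induction n) (simp_all add: av_mult)

lemma av_add3_less: "av u < e \<Longrightarrow> av v < e \<Longrightarrow> av w < e \<Longrightarrow> av (u + v + w) < e"
  using av_add_le_max[of u v] av_add_le_max[of "u + v" w] by linarith

lemma av_add3_le: "av u \<le> e \<Longrightarrow> av v \<le> e \<Longrightarrow> av w \<le> e \<Longrightarrow> av (u + v + w) \<le> e"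
  using av_add_le_max[of u v] av_add_le_max[of "u + v" w] by linarith

lemma av_mult_continuous:
  assumes "0 < e"
  shows "\<exists>\<delta>>0. \<forall>x' y'. av (x' - x) < \<delta> \<longrightarrow> av (y' - y) < \<delta> \<longrightarrow> av (x' * y' - x * y) < e"
proof -
  define C where "C = 1 + av x + av y"
  have C: "1 \<le> C" "av x < C" "av y < C"
    unfolding C_def using av_nonneg[of x] av_nonneg[of y] by linarith+
  define \<delta> where "\<delta> = min 1 (e / C)"
  have \<delta>: "0 < \<delta>" "\<delta> \<le> 1" "C * \<delta> \<le> e"
    unfolding \<delta>_def using assms C by (auto simp: min_def field_simps)
  have "av (x' * y' - x * y) < e" if x': "av (x' - x) < \<delta>" and y': "av (y' - y) < \<delta>" for x' y'
  proof -
    have "av (x' - x) * av (y' - y) < \<delta> * \<delta>"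
      using x' y' by (intro mult_strict_mono') auto
    also have "\<dots> \<le> C * \<delta>"
      using \<delta> C by (intro mult_right_mono) auto
    finally have 1: "av ((x' - x) * (y' - y)) < e"
      using \<delta> by (simp add: av_mult)
    have "av x * av (y' - y) \<le> av x * \<delta>"
      using y' by (intro mult_left_mono) auto
    also have "\<dots> < C * \<delta>"
      using C \<delta> by (intro mult_strict_right_mono) auto
    finally have "av x * av (y' - y) < C * \<delta>" .
    then have 2: "av (x * (y' - y)) < e"
      using \<delta> by (simp add: av_mult)
    have "av (x' - x) * av y \<le> \<delta> * av y"
      using x' by (intro mult_right_mono) auto
    also have "\<dots> < \<delta> * C"
      using C \<delta> by (intro mult_strict_left_mono) auto
    finally have "av (x' - x) * av y < \<delta> * C" .
    then have 3: "av ((x' - x) * y) < e"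
      using \<delta> by (simp add: av_mult mult.commute)
    have "x' * y' - x * y = (x' - x) * (y' - y) + x * (y' - y) + (x' - x) * y"
      by (simp add: algebra_simps)
    then show ?thesis
      using av_add3_less[OF 1 2 3] by simp
  qed
  then show ?thesis
    using \<delta>(1) by blast
qed

lemma av_mult_sub_le:
  assumes x: "av (x - a) \<le> r" and y: "av (y - c) \<le> s"
  shows "av (x * y - a * c) \<le> max (av a * s) (max (av c * r) (r * s))"
proof -
  have "av a * av (y - c) \<le> av a * s" "av c * av (x - a) \<le> av c * r"
    "av (x - a) * av (y - c) \<le> r * s"
    using x y by (auto intro: mult_left_mono mult_mono order_trans[OF av_nonneg])
  then have "av (a * (y - c)) \<le> max (av a * s) (max (av c * r) (r * s))"
    "av (c * (x - a)) \<le> max (av a * s) (max (av c * r) (r * s))"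
    "av ((x - a) * (y - c)) \<le> max (av a * s) (max (av c * r) (r * s))"
    by (simp_all add: av_mult)
  moreover have "x * y - a * c = a * (y - c) + c * (x - a) + (x - a) * (y - c)"
    by (simp add: algebra_simps)
  ultimately show ?thesis
    using av_add3_le by simp
qed

lemma av_mult_sub_eq:
  assumes "av x * av (y - g) < av g * av (x - u)"
  shows "av (x * y - g * u) = av g * av (x - u)"
proof -
  have "x * y - g * u = g * (x - u) + x * (y - g)"
    by (simp add: algebra_simps)
  then show ?thesis
    using av_add_eq_of_less[of "x * (y - g)" "g * (x - u)"] assms by (simp add: av_mult)
qed

lemma av_mult_sub_ge:
  assumes bound: "av x \<le> K" "0 < K" and close: "av (y - g) < \<eta>"
    and \<rho>: "K * \<eta> \<le> \<rho>" "\<rho> \<le> av g * av (x - u)"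
  shows "\<rho> \<le> av (x * y - g * u)"
proof -
  have "av x * av (y - g) \<le> K * av (y - g)"
    using bound by (intro mult_right_mono) auto
  also have "\<dots> < K * \<eta>"
    using bound close by simp
  finally have "av x * av (y - g) < av g * av (x - u)"
    using \<rho> by linarith
  then show ?thesis
    using av_mult_sub_eq \<rho>(2) by simp
qed

lemma add_closed_balls:
  assumes "0 \<le> r" "0 \<le> s"
  shows "{x + y | x y. av (x - a) \<le> r \<and> av (y - c) \<le> s} = {z. av (z - (a + c)) \<le> max r s}"
proof (intro equalityI subsetI)
  fix z assume "z \<in> {x + y | x y. av (x - a) \<le> r \<and> av (y - c) \<le> s}"
  then obtain x y where "z = x + y" "av (x - a) \<le> r" "av (y - c) \<le> s"
    by blast
  then show "z \<in> {z. av (z - (a + c)) \<le> max r s}"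
    using av_add_le_max[of "x - a" "y - c"] by (simp add: algebra_simps)
next
  fix z assume z: "z \<in> {z. av (z - (a + c)) \<le> max r s}"
  show "z \<in> {x + y | x y. av (x - a) \<le> r \<and> av (y - c) \<le> s}"
  proof (cases "s \<le> r")
    case True
    show ?thesis
    proof (intro CollectI exI conjI)
      show "z = (z - c) + c" by simp
      show "av (z - c - a) \<le> r" "av (c - c) \<le> s"
        using z True assms by (simp_all add: algebra_simps)
    qed
  next
    case False
    show ?thesis
    proof (intro CollectI exI conjI)
      show "z = a + (z - a)" by simp
      show "av (a - a) \<le> r" "av (z - a - c) \<le> s"
        using z False assms by (simp_all add: algebra_simps)
    qed
  qed
qed

lemma ex_factor_near:
  assumes "a \<noteq> 0" "av (z - a * c) \<le> av a * s"
  shows "\<exists>y. z = a * y \<and> av (y - c) \<le> s"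
proof (intro exI conjI)
  show "z = a * (c + (z - a * c) / a)"
    using assms(1) by (simp add: field_simps)
  show "av (c + (z - a * c) / a - c) \<le> s"
    using assms av_pos[of a] by (simp add: av_divide pos_divide_le_eq mult.commute)
qed

lemma ex_factor_bounded:
  assumes r: "r \<in> range av" and s: "0 \<le> s" and z: "av z \<le> r * s"
  shows "\<exists>x y. z = x * y \<and> av x \<le> r \<and> av y \<le> s"
proof (cases "z = 0")
  case True
  show ?thesis
  proof (intro exI conjI)
    show "z = 0 * 0" "av 0 \<le> s"
      using True s by simp_all
    show "av 0 \<le> r"
      using r by auto
  qed
next
  case False
  obtain t where t: "av t = r"
    using r by auto
  then have "0 < r * s" "0 \<le> r"
    using z av_pos[OF False] by auto
  then have "0 < r"
    by (simp add: zero_less_mult_iff)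
  then have "t \<noteq> 0"
    using t by auto
  have "av (z / t) \<le> s"
    using z t \<open>0 < r\<close> by (simp add: av_divide pos_divide_le_eq mult.commute)
  moreover have "z = t * (z / t)"
    using \<open>t \<noteq> 0\<close> by simp
  ultimately show ?thesis
    using t by blast
qed

lemma mult_closed_balls:
  assumes a: "a = 0 \<or> r < av a" and c: "c = 0 \<or> s < av c"
    and r: "r \<in> range av" and s: "0 \<le> s"
  shows "{x * y | x y. av (x - a) \<le> r \<and> av (y - c) \<le> s}
    = {z. av (z - a * c) \<le> max (av a * s) (max (av c * r) (r * s))}"
    (is "?prod = ?ball")
proof
  show "?prod \<subseteq> ?ball"
    using av_mult_sub_le by blast
next
  have r0: "0 \<le> r"
    using r by auto
  show "?ball \<subseteq> ?prod"
  proof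
    fix z assume z: "z \<in> ?ball"
    consider "a \<noteq> 0" "av c * r \<le> av a * s" | "c \<noteq> 0" "av a * s \<le> av c * r" | "a = 0" "c = 0"
      using r0 s nle_le[of "av c * r" "av a * s"] by (cases "a = 0"; cases "c = 0") auto
    then show "z \<in> ?prod"
    proof cases
      case 1
      moreover have "r * s \<le> av a * s"
        using 1 a s by (simp add: mult_right_mono)
      ultimately obtain y where y: "z = a * y" "av (y - c) \<le> s"
        using z ex_factor_near[of a z c s] by auto
      show ?thesis
      proof (intro CollectI exI conjI)
        show "z = a * y" "av (y - c) \<le> s" "av (a - a) \<le> r"
          using y r0 by simp_all
      qed
    next
      case 2
      moreover have "r * s \<le> av c * r"
        using 2 c r0 by (simp add: mult_left_mono mult.commute)
      ultimately obtain x where x: "z = c * x" "av (x - a) \<le> r"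
        using z ex_factor_near[of c z a r] by (auto simp: mult.commute)
      show ?thesis
      proof (intro CollectI exI conjI)
        show "z = x * c" "av (x - a) \<le> r" "av (c - c) \<le> s"
          using x s by simp_all
      qed
    next
      case 3
      then show ?thesis
        using z ex_factor_bounded[OF r s, of z] mult_nonneg_nonneg[OF r0 s] by (auto simp: max.absorb2)
    qed
  qed
qed

end

section \<open>Non-archimedean local fields\<close>

locale local_field_av =
  fixes av :: "'k::field \<Rightarrow> real"
  assumes local_field: "nonarch_local_field av"

sublocale local_field_av \<subseteq> nonarch_av
  using local_field by unfold_locales (simp add: nonarch_local_field_def)

context local_field_av
begin

lemma ex_av_gt_1: "\<exists>t. 1 < av t"
proof -
  obtain x where x: "av x \<noteq> 0" "av x \<noteq> 1"
    using local_field unfolding nonarch_local_field_def by auto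
  show ?thesis
  proof (cases "1 < av x")
    case False
    then have "0 < av x" "av x < 1"
      using x av_nonneg[of x] by linarith+
    then have "1 < inverse (av x)"
      by (rule one_less_inverse)
    then have "1 < av (inverse x)"
      by (simp add: av_inverse)
    then show ?thesis ..
  qed auto
qed

lemma Cauchy_convergent:
  fixes s :: "nat \<Rightarrow> 'k"
  assumes "\<forall>e>0. \<exists>N. \<forall>m\<ge>N. \<forall>n\<ge>N. av (s m - s n) < e"
  shows "\<exists>l. \<forall>e>0. \<exists>N. \<forall>n\<ge>N. av (s n - l) < e"
  using local_field assms unfolding nonarch_local_field_def by blast

lemma totally_bounded:
  assumes "0 < e"
  shows "\<exists>F. finite F \<and> {x. av x \<le> R} \<subseteq> (\<Union>c\<in>F. {x. av (x - c) < e})"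
proof -
  obtain t where t: "1 < av t"
    using ex_av_gt_1 by auto
  obtain m where m: "R < av t ^ m"
    using real_arch_pow[OF t] by auto
  have tm: "0 < av (t ^ m)"
    using t by (simp add: av_power)
  obtain F where F: "finite F" "{x. av x \<le> 1} \<subseteq> (\<Union>c\<in>F. {x. av (x - c) < e / av (t ^ m)})"
    using local_field \<open>0 < e\<close> tm unfolding nonarch_local_field_def by (meson divide_pos_pos)
  have "{x. av x \<le> R} \<subseteq> (\<Union>c\<in>(*) (t ^ m) ` F. {x. av (x - c) < e})"
  proof
    fix x assume "x \<in> {x. av x \<le> R}"
    then have "av (x / t ^ m) \<le> 1"
      using m tm by (simp add: av_divide av_power)
    then obtain c where c: "c \<in> F" "av (x / t ^ m - c) < e / av (t ^ m)"
      using F by auto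
    have "t ^ m \<noteq> 0"
      using tm by (metis av_0 less_irrefl)
    then have "x - t ^ m * c = t ^ m * (x / t ^ m - c)"
      by (simp add: field_simps)
    then have "av (x - t ^ m * c) < e"
      using c tm by (simp add: av_mult pos_less_divide_eq mult.commute)
    then show "x \<in> (\<Union>c\<in>(*) (t ^ m) ` F. {x. av (x - c) < e})"
      using c by auto
  qed
  then show ?thesis
    using F(1) by blast
qed

text \<open>Points whose absolute values differ and exceed \<open>\<rho>\<close> are more than \<open>\<rho>\<close> apart, so no
  ball of a finite cover of radius \<open>\<rho>\<close> contains two of them.\<close>

lemma finite_av_values_between:
  assumes "0 < \<rho>"
  shows "finite {v \<in> range av. \<rho> < v \<and> v \<le> R}" (is "finite ?V")
proof -
  obtain F where F: "finite F" "{x. av x \<le> R} \<subseteq> (\<Union>c\<in>F. {x. av (x - c) < \<rho>})"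
    using totally_bounded[OF assms] by blast
  define pt where "pt v = inv av v" for v
  have pt: "av (pt v) = v" if "v \<in> ?V" for v
    using that unfolding pt_def by (auto intro: f_inv_into_f)
  have "\<forall>v\<in>?V. \<exists>c. c \<in> F \<and> av (pt v - c) < \<rho>"
  proof
    fix v assume "v \<in> ?V"
    then have "pt v \<in> {x. av x \<le> R}"
      using pt by simp
    then show "\<exists>c. c \<in> F \<and> av (pt v - c) < \<rho>"
      using F(2) by blast
  qed
  then obtain h where h: "\<And>v. v \<in> ?V \<Longrightarrow> h v \<in> F \<and> av (pt v - h v) < \<rho>"
    using bchoice by meson
  have "inj_on h ?V"
  proof (rule inj_onI, rule ccontr)
    fix v w assume v: "v \<in> ?V" and w: "w \<in> ?V" and "h v = h w" and "v \<noteq> w"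
    have "av (pt v - h v) < \<rho>" "av (h v - pt w) < \<rho>"
      using h[OF v] h[OF w] \<open>h v = h w\<close> av_minus_commute[of "h w" "pt w"] by simp_all
    then have "av (pt v - pt w) < \<rho>"
      using av_diff_le_max[of "pt v" "pt w" "h v"] by linarith
    moreover have "av (pt v - pt w) = max v w"
      using av_diff_eq_max[of "pt v" "pt w"] pt[OF v] pt[OF w] \<open>v \<noteq> w\<close> by simp
    ultimately show False
      using v by auto
  qed
  moreover have "h ` ?V \<subseteq> F"
    using h by blast
  ultimately show ?thesis
    using F(1) finite_imageD finite_subset by blast
qed

lemma av_less_gap:
  assumes "0 < r"
  shows "\<exists>r'<r. \<forall>x. av x < r \<longrightarrow> av x \<le> r'"
proof -
  define V where "V = {v \<in> range av. r / 2 < v \<and> v \<le> r} \<inter> {..<r}"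
  have V: "finite (insert (r / 2) V)"
    unfolding V_def using finite_av_values_between[of "r / 2" r] assms by simp
  have "Max (insert (r / 2) V) < r"
    using V assms by (simp add: V_def)
  moreover have "av x \<le> Max (insert (r / 2) V)" if "av x < r" for x
  proof (cases "av x \<le> r / 2")
    case True
    then show ?thesis
      using Max_ge[OF V insertI1] by linarith
  next
    case False
    then show ?thesis
      using V that by (intro Max_ge) (auto simp: V_def)
  qed
  ultimately show ?thesis
    by blast
qed

lemma ex_countable_dense: "\<exists>D. countable D \<and> (\<forall>x r. 0 < r \<longrightarrow> (\<exists>d\<in>D. av (x - d) < r))"
proof -
  have "\<forall>R n. \<exists>F. finite F \<and> {x. av x \<le> real R} \<subseteq> (\<Union>c\<in>F. {x. av (x - c) < 1 / Suc n})"
    by (simp add: totally_bounded)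
  then obtain F where F: "\<And>R n. finite (F R n)"
    "\<And>R n. {x. av x \<le> real R} \<subseteq> (\<Union>c\<in>F R n. {x. av (x - c) < 1 / Suc n})"
    by metis
  have "\<exists>d\<in>(\<Union>R n. F R n). av (x - d) < r" if r: "0 < r" for x r
  proof -
    obtain n where n: "1 / real (Suc n) < r"
      using nat_approx_posE[OF r] by blast
    have "x \<in> {x. av x \<le> real (nat \<lceil>av x\<rceil>)}"
      by simp
    then obtain d where "d \<in> F (nat \<lceil>av x\<rceil>) n" "av (x - d) < 1 / Suc n"
      using F(2) by blast
    then show ?thesis
      using n by force
  qed
  moreover have "countable (\<Union>R n. F R n)"
    using F(1) by (simp add: countable_finite)
  ultimately show ?thesis
    by blast
qed

lemma av_valued_attains_min:
  assumes range: "\<And>x. f x \<in> range av" and pos: "0 < Inf (range f)"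
  shows "\<exists>x. \<forall>y. f x \<le> f y"
proof -
  define \<epsilon> where "\<epsilon> = Inf (range f)"
  have "0 \<le> f y" for y
    using range[of y] by auto
  then have bdd: "bdd_below (range f)"
    by (intro bdd_belowI[of _ 0]) auto
  have le: "\<epsilon> \<le> f y" for y
    unfolding \<epsilon>_def using bdd by (simp add: cInf_lower)
  have "Inf (range f) < 2 * \<epsilon>"
    using pos unfolding \<epsilon>_def by simp
  then obtain x1 where x1: "f x1 < 2 * \<epsilon>"
    using bdd by (subst (asm) cInf_less_iff) auto
  define V where "V = range f \<inter> {v \<in> range av. \<epsilon> / 2 < v \<and> v \<le> 2 * \<epsilon>}"
  have V: "finite V"
    unfolding V_def using finite_av_values_between[of "\<epsilon> / 2" "2 * \<epsilon>"] pos \<epsilon>_def by simp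
  have inV: "f y \<in> V" if "f y \<le> 2 * \<epsilon>" for y
    unfolding V_def using that le[of y] range[of y] pos \<epsilon>_def by auto
  have "Min V \<in> V"
    using Min_in[OF V] inV[of x1] x1 by auto
  then obtain x where x: "f x = Min V"
    unfolding V_def by auto
  have "f x \<le> f y" for y
  proof (cases "f y \<le> 2 * \<epsilon>")
    case True
    then show ?thesis
      using x V inV by simp
  next
    case False
    then show ?thesis
      using x V inV[of x1] x1 Min_le[OF V, of "f x1"] by linarith
  qed
  then show ?thesis
    by blast
qed

lemma radius_function_vanishes:
  assumes nonneg: "\<And>x. 0 \<le> f x"
    and dist: "\<And>x y. av (x - y) \<le> max (f x) (f y)"
    and shift: "\<And>x y. f x \<le> max (f y) (av (y - x))"
    and small: "\<And>e. 0 < e \<Longrightarrow> \<exists>x. f x < e"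
  shows "\<exists>x. f x = 0"
proof -
  have "\<forall>n. \<exists>x. f x < 1 / real (Suc n)"
    using small by simp
  then obtain c where c: "\<And>n. f (c n) < 1 / real (Suc n)"
    by metis
  have tail: "f (c n) < e" if "1 / real (Suc N) < e" "N \<le> n" for e N n
    using c[of n] that frac_le[of 1 1 "real (Suc N)" "real (Suc n)"] by simp
  have "\<forall>e>0. \<exists>N. \<forall>m\<ge>N. \<forall>n\<ge>N. av (c m - c n) < e"
  proof (intro allI impI)
    fix e :: real assume "0 < e"
    then obtain N where "1 / real (Suc N) < e"
      by (rule nat_approx_posE)
    then have "av (c m - c n) < e" if "N \<le> m" "N \<le> n" for m n
      using dist[of "c m" "c n"] tail[of N e m] tail[of N e n] that by simp
    then show "\<exists>N. \<forall>m\<ge>N. \<forall>n\<ge>N. av (c m - c n) < e"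
      by blast
  qed
  then obtain l where l: "\<And>e. 0 < e \<Longrightarrow> \<exists>N. \<forall>n\<ge>N. av (c n - l) < e"
    using Cauchy_convergent by blast
  have "f l < e" if e: "0 < e" for e
  proof -
    obtain N1 where N1: "\<forall>n\<ge>N1. av (c n - l) < e"
      using l[OF e] by blast
    obtain N2 where N2: "1 / real (Suc N2) < e"
      using e by (rule nat_approx_posE)
    show ?thesis
      using shift[of l "c (max N1 N2)"] N1[rule_format, of "max N1 N2"] tail[OF N2, of "max N1 N2"]
      by simp
  qed
  then have "f l \<le> 0"
    by (metis less_irrefl not_le)
  then show ?thesis
    using nonneg[of l] by auto
qed

lemma radius_function_attains_min:
  assumes range: "\<And>x. f x \<in> range av"
    and dist: "\<And>x y. av (x - y) \<le> max (f x) (f y)"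
    and shift: "\<And>x y. f x \<le> max (f y) (av (y - x))"
  shows "\<exists>x. \<forall>y. f x \<le> f y"
proof (cases "0 < Inf (range f)")
  case True
  then show ?thesis
    using av_valued_attains_min range by blast
next
  case False
  have nonneg: "0 \<le> f x" for x
    using range[of x] by auto
  have "\<exists>x. f x < e" if "0 < e" for e
  proof -
    have "Inf (range f) < e"
      using False that by linarith
    then show ?thesis
      using nonneg by (subst (asm) cInf_less_iff) (auto intro: bdd_belowI[of _ 0])
  qed
  then obtain x where "f x = 0"
    using radius_function_vanishes[OF nonneg dist shift] by blast
  then show ?thesis
    using nonneg by metis
qed

end

section \<open>Measurability with respect to \<^const>\<open>Kborel\<close>\<close>

lemma space_Kborel [simp]: "space (Kborel av) = UNIV"
  unfolding Kborel_def by (rule space_measure_of) simp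

lemma ball_in_Kborel [measurable]: "{x. av (x - c) < r} \<in> sets (Kborel av)"
proof -
  have "sets (Kborel av) = sigma_sets UNIV (range (\<lambda>(c, r). {x. av (x - c) < r}))"
    unfolding Kborel_def by (rule sets_measure_of) simp
  then show ?thesis
    by (auto intro: sigma_sets.Basic image_eqI[of _ _ "(c, r)"])
qed

lemma ball_compl_in_Kborel [measurable]: "{x. r \<le> av (x - c)} \<in> sets (Kborel av)"
proof -
  have "{x. r \<le> av (x - c)} = space (Kborel av) - {x. av (x - c) < r}"
    by auto
  then show ?thesis
    by (metis ball_in_Kborel sets.compl_sets)
qed

lemma measurable_KborelI:
  assumes "\<And>c r. {\<omega> \<in> space M. av (Z \<omega> - c) < r} \<in> sets M"
  shows "Z \<in> M \<rightarrow>\<^sub>M Kborel av"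
  unfolding Kborel_def
proof (rule measurable_measure_of)
  fix B assume "B \<in> range (\<lambda>(c, r). {x. av (x - c) < r})"
  then obtain c r where "B = {x. av (x - c) < r}"
    by auto
  then show "Z -` B \<inter> space M \<in> sets M"
    using assms[of c r] by (simp add: vimage_def Int_def conj_commute)
qed auto

lemma ball_preimage_in_sets:
  assumes "Z \<in> M \<rightarrow>\<^sub>M Kborel av"
  shows "{\<omega> \<in> space M. av (Z \<omega> - c) < r} \<in> sets M"
proof -
  have "{\<omega> \<in> space M. av (Z \<omega> - c) < r} = Z -` {x. av (x - c) < r} \<inter> space M"
    by auto
  then show ?thesis
    using measurable_sets[OF assms ball_in_Kborel] by simp
qed

lemma ball_compl_preimage_in_sets:
  assumes "Z \<in> M \<rightarrow>\<^sub>M Kborel av"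
  shows "{\<omega> \<in> space M. r \<le> av (Z \<omega> - c)} \<in> sets M"
proof -
  have "{\<omega> \<in> space M. r \<le> av (Z \<omega> - c)} = space M - {\<omega> \<in> space M. av (Z \<omega> - c) < r}"
    by auto
  then show ?thesis
    using sets.Diff[OF sets.top ball_preimage_in_sets[OF assms]] by simp
qed

lemma borel_measurable_av_diff [measurable]:
  "Z \<in> M \<rightarrow>\<^sub>M Kborel av \<Longrightarrow> (\<lambda>\<omega>. av (Z \<omega> - e)) \<in> borel_measurable M"
  by (rule borel_measurableI_less) (rule ball_preimage_in_sets)

lemma borel_measurable_av [measurable]:
  "Z \<in> M \<rightarrow>\<^sub>M Kborel av \<Longrightarrow> (\<lambda>\<omega>. av (Z \<omega>)) \<in> borel_measurable M"
  using borel_measurable_av_diff[of Z M av 0] by simp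

context local_field_av
begin

lemma dense_box_in_preimage:
  assumes f: "\<And>e. 0 < e \<Longrightarrow>
      \<exists>\<delta>>0. \<forall>x' y'. av (x' - x) < \<delta> \<longrightarrow> av (y' - y) < \<delta> \<longrightarrow> av (f x' y' - f x y) < e"
    and D: "\<And>x r. 0 < r \<Longrightarrow> \<exists>d\<in>D. av (x - d) < r"
    and xy: "av (f x y - c) < r"
  shows "\<exists>d\<in>D. \<exists>d'\<in>D. \<exists>n. av (x - d) < 1 / Suc n \<and> av (y - d') < 1 / Suc n \<and>
    (\<forall>x' y'. av (x' - d) < 1 / Suc n \<longrightarrow> av (y' - d') < 1 / Suc n \<longrightarrow> av (f x' y' - c) < r)"
proof -
  have "0 < r"
    using xy order.strict_trans1[OF av_nonneg] by blast
  then obtain \<delta> where \<delta>: "0 < \<delta>"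
    "\<And>x' y'. av (x' - x) < \<delta> \<Longrightarrow> av (y' - y) < \<delta> \<Longrightarrow> av (f x' y' - f x y) < r"
    using f by blast
  obtain n where n: "1 / real (Suc n) < \<delta>"
    using \<delta>(1) by (rule nat_approx_posE)
  have "0 < 1 / real (Suc n)"
    by simp
  then obtain d d' where d: "d \<in> D" "av (x - d) < 1 / Suc n" and d': "d' \<in> D" "av (y - d') < 1 / Suc n"
    using D by meson
  have "av (f x' y' - c) < r" if "av (x' - d) < 1 / Suc n" "av (y' - d') < 1 / Suc n" for x' y'
  proof -
    have "av (x' - x) < \<delta>" "av (y' - y) < \<delta>"
      using that d d' n av_diff_le_max[of x' x d] av_diff_le_max[of y' y d']
        av_minus_commute[of x d] av_minus_commute[of y d'] by linarith+
    then have "av (f x' y' - f x y) < r"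
      by (rule \<delta>(2))
    then show ?thesis
      using xy av_diff_le_max[of "f x' y'" c "f x y"] by linarith
  qed
  then show ?thesis
    using d d' by blast
qed

text \<open>\<^const>\<open>Kborel\<close> is generated by balls; with a countable dense set the preimage of a ball
  becomes a countable union of preimages of products of small balls.\<close>

lemma measurable_Kborel_binop:
  assumes f: "\<And>x y e. 0 < e \<Longrightarrow>
      \<exists>\<delta>>0. \<forall>x' y'. av (x' - x) < \<delta> \<longrightarrow> av (y' - y) < \<delta> \<longrightarrow> av (f x' y' - f x y) < e"
    and X: "X \<in> M \<rightarrow>\<^sub>M Kborel av" and Y: "Y \<in> M \<rightarrow>\<^sub>M Kborel av"
  shows "(\<lambda>\<omega>. f (X \<omega>) (Y \<omega>)) \<in> M \<rightarrow>\<^sub>M Kborel av"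
proof (rule measurable_KborelI)
  fix c r
  obtain D where D: "countable D" "\<And>x r. 0 < r \<Longrightarrow> \<exists>d\<in>D. av (x - d) < r"
    using ex_countable_dense by blast
  define I where "I = {(d, d', n). d \<in> D \<and> d' \<in> D \<and>
    (\<forall>x y. av (x - d) < 1 / Suc n \<longrightarrow> av (y - d') < 1 / Suc n \<longrightarrow> av (f x y - c) < r)}"
  define box where "box = (\<lambda>(d, d', n :: nat).
    {\<omega> \<in> space M. av (X \<omega> - d) < 1 / Suc n} \<inter> {\<omega> \<in> space M. av (Y \<omega> - d') < 1 / Suc n})"
  have "{\<omega> \<in> space M. av (f (X \<omega>) (Y \<omega>) - c) < r} = (\<Union>i\<in>I. box i)"
  proof (intro equalityI subsetI)
    fix \<omega> assume \<omega>: "\<omega> \<in> {\<omega> \<in> space M. av (f (X \<omega>) (Y \<omega>) - c) < r}"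
    then obtain d d' n where "(d, d', n) \<in> I" "\<omega> \<in> box (d, d', n)"
      using dense_box_in_preimage[OF f D(2), of "X \<omega>" "Y \<omega>" c r] unfolding I_def box_def by auto
    then show "\<omega> \<in> (\<Union>i\<in>I. box i)"
      by blast
  next
    fix \<omega> assume "\<omega> \<in> (\<Union>i\<in>I. box i)"
    then obtain i where "i \<in> I" "\<omega> \<in> box i"
      by blast
    then obtain d d' n where "(d, d', n) \<in> I" "\<omega> \<in> box (d, d', n)"
      by (cases i) auto
    then show "\<omega> \<in> {\<omega> \<in> space M. av (f (X \<omega>) (Y \<omega>) - c) < r}"
      unfolding I_def box_def by simp
  qed
  also have "\<dots> \<in> sets M"
  proof (rule sets.countable_UN'')
    have "I \<subseteq> D \<times> D \<times> (UNIV :: nat set)"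
      by (auto simp: I_def)
    moreover have "countable (D \<times> D \<times> (UNIV :: nat set))"
      using D(1) by simp
    ultimately show "countable I"
      by (rule countable_subset)
    show "box i \<in> sets M" for i
    proof -
      obtain d d' n where "i = (d, d', n)"
        by (rule prod_cases3)
      then show ?thesis
        unfolding box_def by (simp only: prod.case) (intro sets.Int ball_preimage_in_sets X Y)
    qed
  qed
  finally show "{\<omega> \<in> space M. av (f (X \<omega>) (Y \<omega>) - c) < r} \<in> sets M" .
qed

lemma measurable_Kborel_add [measurable]:
  "X \<in> M \<rightarrow>\<^sub>M Kborel av \<Longrightarrow> Y \<in> M \<rightarrow>\<^sub>M Kborel av \<Longrightarrow> (\<lambda>\<omega>. X \<omega> + Y \<omega>) \<in> M \<rightarrow>\<^sub>M Kborel av"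
proof (rule measurable_Kborel_binop[where f = "(+)"])
  fix x y :: 'k and e :: real assume "0 < e"
  have "av (x' + y' - (x + y)) < e" if "av (x' - x) < e" "av (y' - y) < e" for x' y'
    using that av_add_le_max[of "x' - x" "y' - y"] by (simp add: add_diff_add)
  then show "\<exists>\<delta>>0. \<forall>x' y'. av (x' - x) < \<delta> \<longrightarrow> av (y' - y) < \<delta> \<longrightarrow> av (x' + y' - (x + y)) < e"
    using \<open>0 < e\<close> by blast
qed

lemma measurable_Kborel_mult [measurable]:
  "X \<in> M \<rightarrow>\<^sub>M Kborel av \<Longrightarrow> Y \<in> M \<rightarrow>\<^sub>M Kborel av \<Longrightarrow> (\<lambda>\<omega>. X \<omega> * Y \<omega>) \<in> M \<rightarrow>\<^sub>M Kborel av"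
  by (rule measurable_Kborel_binop[where f = "(*)"]) (rule av_mult_continuous)

end

section \<open>Best constant approximations\<close>

lemma (in prob_space) bex_if_prob_pos_AE:
  assumes "0 < prob A" "AE \<omega> in M. P \<omega>"
  shows "\<exists>\<omega>\<in>A. P \<omega>"
proof (rule ccontr)
  have A: "A \<in> events"
    using assms(1) measure_notin_sets[of A M] by force
  assume "\<not> (\<exists>\<omega>\<in>A. P \<omega>)"
  then have "AE \<omega> in M. \<omega> \<notin> A"
    using assms(2) by (auto elim: eventually_mono)
  then show False
    using prob_eq_0[OF A] assms(1) by simp
qed

locale local_field_prob = prob_space M + local_field_av av
  for M :: "'a measure" and av :: "'k::field \<Rightarrow> real"
begin

lemma Linf_iff_AE_bounded:
  "Z \<in> Linf M av \<longleftrightarrow> Z \<in> M \<rightarrow>\<^sub>M Kborel av \<and> (\<exists>B. AE \<omega> in M. av (Z \<omega>) \<le> B)"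
proof
  assume Z: "Z \<in> Linf M av"
  have "AE \<omega> in M. ereal (av (Z \<omega>)) \<le> norm_inf M av Z"
    unfolding norm_inf_def by (rule esssup_AE)
  then have "AE \<omega> in M. av (Z \<omega>) \<le> real_of_ereal (norm_inf M av Z)"
    using Z unfolding Linf_def by (auto elim!: eventually_mono simp: ereal_le_real_iff)
  then show "Z \<in> M \<rightarrow>\<^sub>M Kborel av \<and> (\<exists>B. AE \<omega> in M. av (Z \<omega>) \<le> B)"
    using Z unfolding Linf_def by blast
next
  assume "Z \<in> M \<rightarrow>\<^sub>M Kborel av \<and> (\<exists>B. AE \<omega> in M. av (Z \<omega>) \<le> B)"
  then obtain B where Z: "Z \<in> M \<rightarrow>\<^sub>M Kborel av" and B: "AE \<omega> in M. av (Z \<omega>) \<le> B"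
    by blast
  have "norm_inf M av Z \<le> ereal B"
    unfolding norm_inf_def using Z B by (intro esssup_I) (auto elim: eventually_mono)
  then show "Z \<in> Linf M av"
    unfolding Linf_def using Z by (auto simp: le_less_trans)
qed

lemma Linf_const: "(\<lambda>\<omega>. c) \<in> Linf M av"
  unfolding Linf_iff_AE_bounded by auto

lemma Linf_add:
  assumes "X \<in> Linf M av" "Y \<in> Linf M av"
  shows "(\<lambda>\<omega>. X \<omega> + Y \<omega>) \<in> Linf M av"
proof -
  obtain B1 B2 where "AE \<omega> in M. av (X \<omega>) \<le> B1" "AE \<omega> in M. av (Y \<omega>) \<le> B2"
    using assms unfolding Linf_iff_AE_bounded by blast
  then have "AE \<omega> in M. av (X \<omega> + Y \<omega>) \<le> max B1 B2"
    by eventually_elim (auto intro: order_trans[OF av_add_le_max] max.mono)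
  then show ?thesis
    using assms unfolding Linf_iff_AE_bounded by auto
qed

lemma Linf_mult:
  assumes "X \<in> Linf M av" "Y \<in> Linf M av"
  shows "(\<lambda>\<omega>. X \<omega> * Y \<omega>) \<in> Linf M av"
proof -
  obtain B1 B2 where "AE \<omega> in M. av (X \<omega>) \<le> B1" "AE \<omega> in M. av (Y \<omega>) \<le> B2"
    using assms unfolding Linf_iff_AE_bounded by blast
  then have "AE \<omega> in M. av (X \<omega> * Y \<omega>) \<le> B1 * B2"
    by eventually_elim (auto intro: mult_mono order_trans[OF av_nonneg] simp: av_mult)
  then show ?thesis
    using assms unfolding Linf_iff_AE_bounded by auto
qed

lemma Linf_affine: "X \<in> Linf M av \<Longrightarrow> (\<lambda>\<omega>. k * X \<omega> + b) \<in> Linf M av"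
  by (intro Linf_add Linf_mult Linf_const)

lemma Linf_diff_const: "Z \<in> Linf M av \<Longrightarrow> (\<lambda>\<omega>. Z \<omega> - e) \<in> Linf M av"
  using Linf_affine[of Z 1 "- e"] by simp

text \<open>\<open>dev Z e\<close> is \<open>\<parallel>Z - e\<parallel>\<^sub>\<infinity>\<close> as a real number (junk value 0 if it is infinite), so
  \<open>\<epsilon>(Z)\<close> is the infimum of \<open>dev Z\<close> and \<open>dev Z 0 = \<parallel>Z\<parallel>\<^sub>\<infinity>\<close>.\<close>

definition dev :: "('a \<Rightarrow> 'k) \<Rightarrow> 'k \<Rightarrow> real" where
  "dev Z e = real_of_ereal (norm_inf M av (\<lambda>\<omega>. Z \<omega> - e))"

lemma norm_inf_nonneg: "0 \<le> norm_inf M av Z"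
proof -
  have "esssup M (\<lambda>\<omega>. 0) \<le> norm_inf M av Z"
    unfolding norm_inf_def by (intro esssup_AE_mono) auto
  then show ?thesis
    by (simp add: esssup_const emeasure_space_1)
qed

lemma dev_nonneg: "0 \<le> dev Z e"
  unfolding dev_def by (simp add: real_of_ereal_pos norm_inf_nonneg)

lemma norm_inf_eq_dev:
  assumes "Z \<in> Linf M av"
  shows "norm_inf M av (\<lambda>\<omega>. Z \<omega> - e) = ereal (dev Z e)"
  using Linf_diff_const[OF assms, of e] norm_inf_nonneg[of "\<lambda>\<omega>. Z \<omega> - e"]
  unfolding dev_def Linf_def by (cases "norm_inf M av (\<lambda>\<omega>. Z \<omega> - e)") auto

lemma AE_av_le_dev:
  assumes "Z \<in> Linf M av"
  shows "AE \<omega> in M. av (Z \<omega> - e) \<le> dev Z e"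
proof -
  have "AE \<omega> in M. ereal (av (Z \<omega> - e)) \<le> norm_inf M av (\<lambda>\<omega>. Z \<omega> - e)"
    unfolding norm_inf_def by (rule esssup_AE)
  then show ?thesis
    by (simp add: norm_inf_eq_dev[OF assms])
qed

lemma dev_le:
  assumes "Z \<in> Linf M av" and "AE \<omega> in M. av (Z \<omega> - e) \<le> z"
  shows "dev Z e \<le> z"
proof -
  have "Z \<in> M \<rightarrow>\<^sub>M Kborel av"
    using assms(1) unfolding Linf_def by simp
  then have "norm_inf M av (\<lambda>\<omega>. Z \<omega> - e) \<le> ereal z"
    unfolding norm_inf_def using assms(2) by (intro esssup_I) auto
  then show ?thesis
    by (simp add: norm_inf_eq_dev[OF assms(1)])
qed

lemma dev_ge:
  assumes "Z \<in> Linf M av" and "0 < prob A"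
    and "AE \<omega> in M. \<omega> \<in> A \<longrightarrow> r \<le> av (Z \<omega> - e)"
  shows "r \<le> dev Z e"
proof -
  have "AE \<omega> in M. \<omega> \<in> A \<longrightarrow> r \<le> dev Z e"
    using assms(3) AE_av_le_dev[OF assms(1), of e] by eventually_elim auto
  then show ?thesis
    using bex_if_prob_pos_AE[OF assms(2)] by blast
qed

text \<open>The values of \<^term>\<open>av\<close> have a gap below any \<open>r > 0\<close>, so \<open>|Z - e| < r\<close> almost surely
  would already force \<open>dev Z e < r\<close>.\<close>

lemma prob_av_ge_pos:
  assumes Z: "Z \<in> Linf M av" and r: "r \<le> dev Z e"
  shows "0 < prob {\<omega> \<in> space M. r \<le> av (Z \<omega> - e)}"
proof (rule ccontr)
  have sets: "{\<omega> \<in> space M. r \<le> av (Z \<omega> - e)} \<in> sets M"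
    using Z unfolding Linf_def by (simp add: ball_compl_preimage_in_sets)
  assume "\<not> 0 < prob {\<omega> \<in> space M. r \<le> av (Z \<omega> - e)}"
  then have "prob {\<omega> \<in> space M. r \<le> av (Z \<omega> - e)} = 0"
    using measure_nonneg[of M] by (simp add: order.strict_iff_order)
  then have "AE \<omega> in M. \<omega> \<notin> {\<omega> \<in> space M. r \<le> av (Z \<omega> - e)}"
    using prob_eq_0[OF sets] by simp
  then have less: "AE \<omega> in M. av (Z \<omega> - e) < r"
    using AE_space by eventually_elim auto
  show False
  proof (cases "0 < r")
    case True
    obtain r' where r': "r' < r" "\<And>x. av x < r \<Longrightarrow> av x \<le> r'"
      using av_less_gap[OF True] by blast
    have "dev Z e \<le> r'"
      using less by (intro dev_le[OF Z]) (auto elim: eventually_mono simp: r'(2))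
    then show False
      using r r'(1) by linarith
  next
    case False
    have "AE \<omega> in M. False"
      using less
    proof eventually_elim
      case (elim \<omega>)
      then show ?case
        using False av_nonneg[of "Z \<omega> - e"] by linarith
    qed
    then show False
      by (simp add: AE_False emeasure_space_1)
  qed
qed

lemma dev_in_range_av:
  assumes Z: "Z \<in> Linf M av"
  shows "dev Z e \<in> range av"
proof -
  obtain \<omega> where "dev Z e \<le> av (Z \<omega> - e)" "av (Z \<omega> - e) \<le> dev Z e"
    using bex_if_prob_pos_AE prob_av_ge_pos[OF Z order_refl] AE_av_le_dev[OF Z] by blast
  then show ?thesis
    by (metis antisym rangeI)
qed

lemma dev_const: "dev (\<lambda>\<omega>. b) e = av (b - e)"
proof -
  have "AE \<omega> in M. av (b - e) \<le> dev (\<lambda>\<omega>. b) e"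
    using AE_av_le_dev[OF Linf_const] .
  then have "av (b - e) \<le> dev (\<lambda>\<omega>. b) e"
    by (simp add: AE_const emeasure_space_1)
  moreover have "dev (\<lambda>\<omega>. b) e \<le> av (b - e)"
    by (rule dev_le[OF Linf_const]) simp
  ultimately show ?thesis
    by linarith
qed

lemma av_diff_le_max_dev:
  assumes Z: "Z \<in> Linf M av"
  shows "av (e - e') \<le> max (dev Z e) (dev Z e')"
proof -
  have AE: "AE \<omega> in M. av (Z \<omega> - e) \<le> dev Z e \<and> av (Z \<omega> - e') \<le> dev Z e'"
    using AE_av_le_dev[OF Z, of e] AE_av_le_dev[OF Z, of e'] by eventually_elim simp
  obtain \<omega> where "av (Z \<omega> - e) \<le> dev Z e" "av (Z \<omega> - e') \<le> dev Z e'"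
    using bex_if_prob_pos_AE[OF _ AE, of "space M"] by (auto simp: prob_space)
  then show ?thesis
    using av_diff_le_max[of e e' "Z \<omega>"] av_minus_commute[of e "Z \<omega>"] by linarith
qed

lemma dev_le_max_av:
  assumes Z: "Z \<in> Linf M av"
  shows "dev Z e \<le> max (dev Z e') (av (e' - e))"
proof (rule dev_le[OF Z])
  show "AE \<omega> in M. av (Z \<omega> - e) \<le> max (dev Z e') (av (e' - e))"
    using AE_av_le_dev[OF Z, of e']
  proof eventually_elim
    case (elim \<omega>)
    have "av (Z \<omega> - e) \<le> max (av (Z \<omega> - e')) (av (e' - e))"
      by (rule av_diff_le_max)
    also have "\<dots> \<le> max (dev Z e') (av (e' - e))"
      using elim by (rule max.mono) simp
    finally show ?case .
  qed
qed

lemma EK_iff_minimizer: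
  assumes Z: "Z \<in> Linf M av"
  shows "e \<in> EK M av Z \<longleftrightarrow> (\<forall>e'. dev Z e \<le> dev Z e')"
proof -
  have "e \<in> EK M av Z \<longleftrightarrow> ereal (dev Z e) = (INF c. ereal (dev Z c))"
    unfolding EK_def eps_dev_def norm_inf_eq_dev[OF Z] by simp
  also have "\<dots> \<longleftrightarrow> (\<forall>e'. dev Z e \<le> dev Z e')"
  proof
    assume "ereal (dev Z e) = (INF c. ereal (dev Z c))"
    then show "\<forall>e'. dev Z e \<le> dev Z e'"
      by (metis INF_lower UNIV_I ereal_less_eq(3))
  next
    assume "\<forall>e'. dev Z e \<le> dev Z e'"
    then show "ereal (dev Z e) = (INF c. ereal (dev Z c))"
      by (intro antisym INF_greatest) (auto intro: INF_lower)
  qed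
  finally show ?thesis .
qed

lemma EK_nonempty:
  assumes Z: "Z \<in> Linf M av"
  shows "EK M av Z \<noteq> {}"
proof -
  obtain e where "\<forall>e'. dev Z e \<le> dev Z e'"
    using radius_function_attains_min[of "dev Z"] dev_in_range_av[OF Z]
      av_diff_le_max_dev[OF Z] dev_le_max_av[OF Z] by blast
  then show ?thesis
    using EK_iff_minimizer[OF Z] by blast
qed

lemma EK_eq_closed_ball:
  assumes Z: "Z \<in> Linf M av" and lower: "\<And>d. r \<le> dev Z d" and upper: "dev Z e0 \<le> r"
  shows "EK M av Z = {e. av (e - e0) \<le> r}"
proof (intro equalityI subsetI CollectI)
  fix e assume "e \<in> EK M av Z"
  then have "dev Z e \<le> dev Z e0"
    by (simp add: EK_iff_minimizer[OF Z])
  then show "av (e - e0) \<le> r"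
    using av_diff_le_max_dev[OF Z, of e e0] upper by linarith
next
  fix e assume "e \<in> {e. av (e - e0) \<le> r}"
  then have "dev Z e \<le> r"
    using dev_le_max_av[OF Z, of e e0] upper av_minus_commute[of e e0] by auto
  then show "e \<in> EK M av Z"
    using lower by (auto simp: EK_iff_minimizer[OF Z] intro: order_trans)
qed

lemma EK_eq_closed_ball_center:
  assumes Z: "Z \<in> Linf M av" and e0: "e0 \<in> EK M av Z"
  shows "EK M av Z = {e. av (e - e0) \<le> dev Z e0}"
  using e0 by (intro EK_eq_closed_ball[OF Z]) (simp_all add: EK_iff_minimizer[OF Z])

lemma EK_subset_closed_ball:
  assumes Z: "Z \<in> Linf M av"
  shows "EK M av Z \<subseteq> {e. av (e - e0) \<le> dev Z e0}"
proof
  fix e assume "e \<in> EK M av Z"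
  then have "dev Z e \<le> dev Z e0"
    by (simp add: EK_iff_minimizer[OF Z])
  then show "e \<in> {e. av (e - e0) \<le> dev Z e0}"
    using av_diff_le_max_dev[OF Z, of e e0] by simp
qed

lemma dev_zero_eq_max:
  assumes Z: "Z \<in> Linf M av" and a: "a \<in> EK M av Z"
  shows "dev Z 0 = max (av a) (dev Z a)"
proof -
  have "dev Z 0 \<le> max (dev Z a) (av (a - 0))"
    by (rule dev_le_max_av[OF Z])
  moreover have "av (a - 0) \<le> max (dev Z a) (dev Z 0)"
    by (rule av_diff_le_max_dev[OF Z])
  moreover have "dev Z a \<le> dev Z 0"
    using a by (simp add: EK_iff_minimizer[OF Z])
  ultimately show ?thesis
    by (auto simp: max_def split: if_splits)
qed

lemma ex_EK_zero_or_dev_less: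
  assumes Z: "Z \<in> Linf M av"
  shows "\<exists>a\<in>EK M av Z. a = 0 \<or> dev Z a < av a"
proof -
  obtain a where a: "a \<in> EK M av Z"
    using EK_nonempty[OF Z] by blast
  show ?thesis
  proof (cases "dev Z a < av a")
    case False
    then have "0 \<in> EK M av Z"
      using EK_eq_closed_ball_center[OF Z a] by simp
    then show ?thesis
      by blast
  qed (use a in blast)
qed

lemma dev_affine:
  assumes X: "X \<in> Linf M av" and k: "k \<noteq> 0"
  shows "dev (\<lambda>\<omega>. k * X \<omega> + b) (k * a + b) = av k * dev X a"
proof -
  have "k * X \<omega> + b - (k * a + b) = k * (X \<omega> - a)" for \<omega>
    by (simp add: algebra_simps)
  then have "av (k * X \<omega> + b - (k * a + b)) = av k * av (X \<omega> - a)" for \<omega>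
    by (simp add: av_mult)
  then have "norm_inf M av (\<lambda>\<omega>. k * X \<omega> + b - (k * a + b))
      = esssup M (\<lambda>\<omega>. ereal (av k) * ereal (av (X \<omega> - a)))"
    unfolding norm_inf_def by simp
  also have "\<dots> = ereal (av k) * norm_inf M av (\<lambda>\<omega>. X \<omega> - a)"
    unfolding norm_inf_def using av_pos[OF k] by (rule esssup_cmult)
  also have "\<dots> = ereal (av k * dev X a)"
    by (simp add: norm_inf_eq_dev[OF X])
  finally show ?thesis
    by (simp add: dev_def)
qed

lemma EK_const: "EK M av (\<lambda>\<omega>. b) = {b}"
proof -
  have "e \<in> EK M av (\<lambda>\<omega>. b) \<longleftrightarrow> e = b" for e
  proof
    assume "e \<in> EK M av (\<lambda>\<omega>. b)"
    then have "av (b - e) \<le> av (b - b)"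
      unfolding EK_iff_minimizer[OF Linf_const] dev_const by blast
    then have "av (b - e) = 0"
      using av_nonneg[of "b - e"] by simp
    then show "e = b"
      by simp
  qed (simp add: EK_iff_minimizer[OF Linf_const] dev_const)
  then show ?thesis
    by blast
qed

lemma EK_affine:
  assumes X: "X \<in> Linf M av"
  shows "EK M av (\<lambda>\<omega>. k * X \<omega> + b) = (\<lambda>a. k * a + b) ` EK M av X"
proof (cases "k = 0")
  case True
  then show ?thesis
    using EK_const EK_nonempty[OF X] by auto
next
  case False
  let ?Y = "\<lambda>\<omega>. k * X \<omega> + b"
  have Y: "?Y \<in> Linf M av"
    using X by (rule Linf_affine)
  have all_affine: "(\<forall>e. Q e) \<longleftrightarrow> (\<forall>a. Q (k * a + b))" for Q
  proof
    assume "\<forall>a. Q (k * a + b)"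
    then have "Q (k * ((e - b) / k) + b)" for e
      by blast
    then show "\<forall>e. Q e"
      using False by simp
  qed simp
  have iff: "k * a + b \<in> EK M av ?Y \<longleftrightarrow> a \<in> EK M av X" for a
  proof -
    have "k * a + b \<in> EK M av ?Y \<longleftrightarrow> (\<forall>a'. dev ?Y (k * a + b) \<le> dev ?Y (k * a' + b))"
      unfolding EK_iff_minimizer[OF Y] by (rule all_affine)
    also have "\<dots> \<longleftrightarrow> a \<in> EK M av X"
      using av_pos[OF False] by (simp add: dev_affine[OF X False] EK_iff_minimizer[OF X])
    finally show ?thesis .
  qed
  show ?thesis
  proof (intro equalityI subsetI)
    fix e assume "e \<in> EK M av ?Y"
    then have "(e - b) / k \<in> EK M av X"
      using iff[of "(e - b) / k"] False by simp
    then show "e \<in> (\<lambda>a. k * a + b) ` EK M av X"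
      by (rule rev_image_eqI) (simp add: False)
  qed (auto simp: iff)
qed

lemma dev_add_le:
  assumes X: "X \<in> Linf M av" and Y: "Y \<in> Linf M av"
  shows "dev (\<lambda>\<omega>. X \<omega> + Y \<omega>) (a + c) \<le> max (dev X a) (dev Y c)"
proof (rule dev_le[OF Linf_add[OF X Y]])
  show "AE \<omega> in M. av (X \<omega> + Y \<omega> - (a + c)) \<le> max (dev X a) (dev Y c)"
    using AE_av_le_dev[OF X, of a] AE_av_le_dev[OF Y, of c]
  proof eventually_elim
    case (elim \<omega>)
    have "av (X \<omega> + Y \<omega> - (a + c)) \<le> max (av (X \<omega> - a)) (av (Y \<omega> - c))"
      using av_add_le_max[of "X \<omega> - a" "Y \<omega> - c"] by (simp add: algebra_simps)
    also have "\<dots> \<le> max (dev X a) (dev Y c)"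
      using elim by (rule max.mono)
    finally show ?case .
  qed
qed

lemma sumset_EK_eq_closed_ball:
  assumes X: "X \<in> Linf M av" and Y: "Y \<in> Linf M av"
    and a: "a \<in> EK M av X" and c: "c \<in> EK M av Y"
  shows "{a' + c' | a' c'. a' \<in> EK M av X \<and> c' \<in> EK M av Y}
    = {z. av (z - (a + c)) \<le> max (dev X a) (dev Y c)}"
  using add_closed_balls[OF dev_nonneg dev_nonneg]
  by (simp add: EK_eq_closed_ball_center[OF X a] EK_eq_closed_ball_center[OF Y c])

lemma prodset_EK_eq_closed_ball:
  assumes X: "X \<in> Linf M av" and Y: "Y \<in> Linf M av"
    and a: "a \<in> EK M av X" "a = 0 \<or> dev X a < av a"
    and c: "c \<in> EK M av Y" "c = 0 \<or> dev Y c < av c"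
  shows "{a' * c' | a' c'. a' \<in> EK M av X \<and> c' \<in> EK M av Y}
    = {z. av (z - a * c) \<le> max (av a * dev Y c) (max (av c * dev X a) (dev X a * dev Y c))}"
  using mult_closed_balls[OF a(2) c(2) dev_in_range_av[OF X] dev_nonneg]
  by (simp add: EK_eq_closed_ball_center[OF X a(1)] EK_eq_closed_ball_center[OF Y c(1)])

lemma EK_add_subset:
  assumes X: "X \<in> Linf M av" and Y: "Y \<in> Linf M av"
  shows "EK M av (\<lambda>\<omega>. X \<omega> + Y \<omega>) \<subseteq> {a + c | a c. a \<in> EK M av X \<and> c \<in> EK M av Y}"
proof -
  obtain a c where a: "a \<in> EK M av X" and c: "c \<in> EK M av Y"
    using EK_nonempty[OF X] EK_nonempty[OF Y] by blast
  have "EK M av (\<lambda>\<omega>. X \<omega> + Y \<omega>) \<subseteq> {e. av (e - (a + c)) \<le> dev (\<lambda>\<omega>. X \<omega> + Y \<omega>) (a + c)}"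
    by (rule EK_subset_closed_ball[OF Linf_add[OF X Y]])
  also have "\<dots> \<subseteq> {e. av (e - (a + c)) \<le> max (dev X a) (dev Y c)}"
    using dev_add_le[OF X Y, of a c] by auto
  finally show ?thesis
    using sumset_EK_eq_closed_ball[OF X Y a c] by simp
qed

end

subsection \<open>Independent random variables\<close>

lemma (in prob_space) indep_var_sym:
  assumes "indep_var S X T Y"
  shows "indep_var T Y S X"
proof -
  let ?\<sigma>X = "sigma_sets (space M) {X -` A \<inter> space M | A. A \<in> sets S}"
  let ?\<sigma>Y = "sigma_sets (space M) {Y -` A \<inter> space M | A. A \<in> sets T}"
  have rv: "random_variable S X" "random_variable T Y" and ind: "indep_set ?\<sigma>X ?\<sigma>Y"
    using assms unfolding indep_var_eq by auto
  have "indep_set ?\<sigma>Y ?\<sigma>X"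
  proof (rule indep_setI)
    show "prob (a \<inter> b) = prob a * prob b" if "a \<in> ?\<sigma>Y" "b \<in> ?\<sigma>X" for a b
      using indep_setD[OF ind that(2,1)] by (simp add: Int_commute mult.commute)
  qed (use indep_setD_ev1[OF ind] indep_setD_ev2[OF ind] in auto)
  then show ?thesis
    using rv unfolding indep_var_eq by blast
qed

lemma (in prob_space) indep_var_prob_pos:
  assumes "indep_var S X T Y" "A \<in> sets S" "B \<in> sets T"
    and "0 < prob {\<omega> \<in> space M. X \<omega> \<in> A}" "0 < prob {\<omega> \<in> space M. Y \<omega> \<in> B}"
  shows "0 < prob {\<omega> \<in> space M. X \<omega> \<in> A \<and> Y \<omega> \<in> B}"
proof -
  have "(\<lambda>\<omega>. (X \<omega>, Y \<omega>)) -` (A \<times> B) \<inter> space M = {\<omega> \<in> space M. X \<omega> \<in> A \<and> Y \<omega> \<in> B}"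
    "X -` A \<inter> space M = {\<omega> \<in> space M. X \<omega> \<in> A}" "Y -` B \<inter> space M = {\<omega> \<in> space M. Y \<omega> \<in> B}"
    by auto
  then show ?thesis
    using indep_varD[OF assms(1-3)] assms(4,5) by simp
qed

context local_field_prob
begin

text \<open>Finitely many \<open>\<eta>\<close>-balls cover the essential range of \<open>Y\<close>, so one of them carries
  positive probability.\<close>

lemma ex_ball_prob_pos:
  assumes Y: "Y \<in> Linf M av" and S: "S \<in> sets (Kborel av)"
    and pos: "0 < prob {\<omega> \<in> space M. Y \<omega> \<in> S}" and \<eta>: "0 < \<eta>"
  shows "\<exists>g. 0 < prob {\<omega> \<in> space M. Y \<omega> \<in> S \<and> av (Y \<omega> - g) < \<eta>}"
proof (rule ccontr)
  assume none: "\<not> ?thesis"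
  have Ym: "Y \<in> M \<rightarrow>\<^sub>M Kborel av"
    using Y by (simp add: Linf_def)
  obtain B where B: "AE \<omega> in M. av (Y \<omega>) \<le> B"
    using Y unfolding Linf_iff_AE_bounded by blast
  obtain F where F: "finite F" "{x. av x \<le> B} \<subseteq> (\<Union>g\<in>F. {x. av (x - g) < \<eta>})"
    using totally_bounded[OF \<eta>] by blast
  have null: "AE \<omega> in M. \<not> (Y \<omega> \<in> S \<and> av (Y \<omega> - g) < \<eta>)" for g
  proof -
    have "{\<omega> \<in> space M. Y \<omega> \<in> S \<and> av (Y \<omega> - g) < \<eta>} = Y -` (S \<inter> {x. av (x - g) < \<eta>}) \<inter> space M"
      by auto
    then have "{\<omega> \<in> space M. Y \<omega> \<in> S \<and> av (Y \<omega> - g) < \<eta>} \<in> events"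
      using measurable_sets[OF Ym sets.Int[OF S ball_in_Kborel]] by simp
    moreover have "prob {\<omega> \<in> space M. Y \<omega> \<in> S \<and> av (Y \<omega> - g) < \<eta>} = 0"
      using none measure_nonneg[of M] by (meson not_le order.antisym)
    ultimately show ?thesis
      using prob_eq_0 AE_space by (fastforce elim: eventually_mono)
  qed
  have "AE \<omega> in M. \<forall>g\<in>F. \<not> (Y \<omega> \<in> S \<and> av (Y \<omega> - g) < \<eta>)"
    using F(1) null by (rule AE_finite_allI)
  then have "AE \<omega> in M. Y \<omega> \<notin> S"
    using B
  proof eventually_elim
    case (elim \<omega>)
    then show ?case
      using F(2) by blast
  qed
  then have "AE \<omega> in M. \<omega> \<notin> {\<omega> \<in> space M. Y \<omega> \<in> S}"
    by (auto elim: eventually_mono)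
  moreover have "{\<omega> \<in> space M. Y \<omega> \<in> S} \<in> events"
    using measurable_sets[OF Ym S] by (simp add: vimage_def Int_def conj_commute)
  ultimately have "prob {\<omega> \<in> space M. Y \<omega> \<in> S} = 0"
    using prob_eq_0 by blast
  then show False
    using pos by simp
qed

lemma dev_add_ge:
  assumes ind: "indep_var (Kborel av) X (Kborel av) Y"
    and X: "X \<in> Linf M av" and Y: "Y \<in> Linf M av" and r: "\<And>u. r \<le> dev X u"
  shows "r \<le> dev (\<lambda>\<omega>. X \<omega> + Y \<omega>) d"
proof (cases "0 < r")
  case False
  then show ?thesis
    using dev_nonneg[of "\<lambda>\<omega>. X \<omega> + Y \<omega>" d] by linarith
next
  case True
  have "UNIV \<in> sets (Kborel av)"
    using sets.top[of "Kborel av"] by simp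
  moreover have "0 < prob {\<omega> \<in> space M. Y \<omega> \<in> UNIV}"
    by (simp add: prob_space)
  ultimately obtain g where g: "0 < prob {\<omega> \<in> space M. Y \<omega> \<in> UNIV \<and> av (Y \<omega> - g) < r}"
    using ex_ball_prob_pos[OF Y _ _ True] by blast
  define u where "u = d - g"
  have "0 < prob {\<omega> \<in> space M. X \<omega> \<in> {x. r \<le> av (x - u)}}"
    using prob_av_ge_pos[OF X r] by simp
  then have joint: "0 < prob {\<omega> \<in> space M. X \<omega> \<in> {x. r \<le> av (x - u)} \<and> Y \<omega> \<in> {y. av (y - g) < r}}"
    using g by (intro indep_var_prob_pos[OF ind]) simp_all
  show ?thesis
  proof (rule dev_ge[OF Linf_add[OF X Y] joint], intro AE_I2 impI)
    fix \<omega> assume "\<omega> \<in> {\<omega> \<in> space M. X \<omega> \<in> {x. r \<le> av (x - u)} \<and> Y \<omega> \<in> {y. av (y - g) < r}}"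
    then have less: "av (Y \<omega> - g) < av (X \<omega> - u)" and ge: "r \<le> av (X \<omega> - u)"
      by auto
    have "av (X \<omega> + Y \<omega> - d) = av ((X \<omega> - u) + (Y \<omega> - g))"
      unfolding u_def by (simp add: algebra_simps)
    also have "\<dots> = av (X \<omega> - u)"
      using less by (rule av_add_eq_of_less)
    finally show "r \<le> av (X \<omega> + Y \<omega> - d)"
      using ge by simp
  qed
qed

lemma EK_add_indep:
  assumes ind: "indep_var (Kborel av) X (Kborel av) Y"
    and X: "X \<in> Linf M av" and Y: "Y \<in> Linf M av"
  shows "EK M av (\<lambda>\<omega>. X \<omega> + Y \<omega>) = {a + c | a c. a \<in> EK M av X \<and> c \<in> EK M av Y}"
proof -
  obtain a c where a: "a \<in> EK M av X" and c: "c \<in> EK M av Y"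
    using EK_nonempty[OF X] EK_nonempty[OF Y] by blast
  have "dev X a \<le> dev (\<lambda>\<omega>. X \<omega> + Y \<omega>) d" for d
    using a by (intro dev_add_ge[OF ind X Y]) (simp add: EK_iff_minimizer[OF X])
  moreover have "dev Y c \<le> dev (\<lambda>\<omega>. X \<omega> + Y \<omega>) d" for d
    using dev_add_ge[OF indep_var_sym[OF ind] Y X, of "dev Y c" d] c
    by (simp add: EK_iff_minimizer[OF Y] add.commute)
  ultimately have "EK M av (\<lambda>\<omega>. X \<omega> + Y \<omega>) = {e. av (e - (a + c)) \<le> max (dev X a) (dev Y c)}"
    by (intro EK_eq_closed_ball[OF Linf_add[OF X Y]] dev_add_le[OF X Y]) simp
  then show ?thesis
    using sumset_EK_eq_closed_ball[OF X Y a c] by simp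
qed

lemma ex_ball_prob_pos_large_center:
  assumes Y: "Y \<in> Linf M av" and \<eta>: "0 < \<eta>" "\<eta> \<le> s" and s: "s \<le> dev Y 0"
  shows "\<exists>g. s \<le> av g \<and> 0 < prob {\<omega> \<in> space M. Y \<omega> \<in> {y. s \<le> av y} \<inter> {y. av (y - g) < \<eta>}}"
proof -
  have "{y. s \<le> av y} \<in> sets (Kborel av)"
    using ball_compl_in_Kborel[of s av 0] by simp
  moreover have "0 < prob {\<omega> \<in> space M. Y \<omega> \<in> {y. s \<le> av y}}"
    using prob_av_ge_pos[OF Y s] by simp
  ultimately obtain g where g: "0 < prob {\<omega> \<in> space M. Y \<omega> \<in> {y. s \<le> av y} \<and> av (Y \<omega> - g) < \<eta>}"
    using ex_ball_prob_pos[OF Y _ _ \<eta>(1)] by blast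
  obtain \<omega> where \<omega>: "s \<le> av (Y \<omega>)" "av (Y \<omega> - g) < \<eta>"
    using bex_if_prob_pos_AE[OF g AE_I2[OF TrueI]] by auto
  then have "av (Y \<omega> + (g - Y \<omega>)) = av (Y \<omega>)"
    using \<eta>(2) av_minus_commute[of g "Y \<omega>"] by (intro av_add_eq_of_less) simp
  then have "s \<le> av g"
    using \<omega>(1) by simp
  then show ?thesis
    using g by auto
qed

text \<open>On the event where \<open>|X - d/g| \<ge> r\<close> and \<open>Y\<close> is \<open>\<eta>\<close>-close to some \<open>g\<close> with
  \<open>|g| \<ge> \<parallel>Y\<parallel>\<^sub>\<infinity>\<close>, the term \<open>g (X - d/g)\<close> dominates \<open>X (Y - g)\<close> in
  \<open>XY - d = g (X - d/g) + X (Y - g)\<close>.\<close>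

lemma dev_mult_ge:
  assumes ind: "indep_var (Kborel av) X (Kborel av) Y"
    and X: "X \<in> Linf M av" and Y: "Y \<in> Linf M av" and r: "\<And>u. r \<le> dev X u"
  shows "r * dev Y 0 \<le> dev (\<lambda>\<omega>. X \<omega> * Y \<omega>) d"
proof (cases "0 < r \<and> 0 < dev Y 0")
  case False
  then have "r * dev Y 0 \<le> 0"
    using dev_nonneg[of Y 0] by (auto simp: not_less mult_nonpos_nonneg)
  then show ?thesis
    using dev_nonneg[of "\<lambda>\<omega>. X \<omega> * Y \<omega>" d] by linarith
next
  case True
  define s where "s = dev Y 0"
  obtain B where B: "AE \<omega> in M. av (X \<omega>) \<le> B"
    using X unfolding Linf_iff_AE_bounded by blast
  define K where "K = max B r"
  define \<eta> where "\<eta> = s * r / K"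
  have K: "0 < K" "r \<le> K"
    unfolding K_def using True by auto
  have \<eta>: "0 < \<eta>" "\<eta> \<le> s" "K * \<eta> = s * r"
    unfolding \<eta>_def s_def using True K by (auto simp: field_simps mult_left_mono)
  obtain g where g: "s \<le> av g" "0 < prob {\<omega> \<in> space M. Y \<omega> \<in> {y. s \<le> av y} \<inter> {y. av (y - g) < \<eta>}}"
    using ex_ball_prob_pos_large_center[OF Y \<eta>(1,2)] s_def by auto
  then have "g \<noteq> 0"
    using True s_def by auto
  define u where "u = d / g"
  have "0 < prob {\<omega> \<in> space M. X \<omega> \<in> {x. r \<le> av (x - u)}}"
    using prob_av_ge_pos[OF X r] by simp
  then have joint: "0 < prob {\<omega> \<in> space M. X \<omega> \<in> {x. r \<le> av (x - u)}
      \<and> Y \<omega> \<in> {y. s \<le> av y} \<inter> {y. av (y - g) < \<eta>}}"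
    using g(2) ball_compl_in_Kborel[of s av 0] by (intro indep_var_prob_pos[OF ind]) auto
  have "s * r \<le> dev (\<lambda>\<omega>. X \<omega> * Y \<omega>) d"
  proof (rule dev_ge[OF Linf_mult[OF X Y] joint])
    have "s * r \<le> av (x * y - d)" if "av x \<le> K" "r \<le> av (x - u)" "av (y - g) < \<eta>" for x y
    proof -
      have "s * r \<le> av g * av (x - u)"
        using g(1) that(2) True s_def by (simp add: mult_mono)
      then have "s * r \<le> av (x * y - g * u)"
        using av_mult_sub_ge[OF that(1) K(1) that(3)] \<eta>(3) by simp
      then show ?thesis
        unfolding u_def using \<open>g \<noteq> 0\<close> by simp
    qed
    then show "AE \<omega> in M. \<omega> \<in> {\<omega> \<in> space M. X \<omega> \<in> {x. r \<le> av (x - u)}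
        \<and> Y \<omega> \<in> {y. s \<le> av y} \<inter> {y. av (y - g) < \<eta>}} \<longrightarrow> s * r \<le> av (X \<omega> * Y \<omega> - d)"
      using B unfolding K_def by (auto elim!: eventually_mono)
  qed
  then show ?thesis
    by (simp add: s_def mult.commute)
qed

lemma dev_mult_le:
  assumes X: "X \<in> Linf M av" and Y: "Y \<in> Linf M av"
  shows "dev (\<lambda>\<omega>. X \<omega> * Y \<omega>) (a * c) \<le> max (av a * dev Y c) (max (av c * dev X a) (dev X a * dev Y c))"
proof (rule dev_le[OF Linf_mult[OF X Y]])
  show "AE \<omega> in M. av (X \<omega> * Y \<omega> - a * c) \<le> max (av a * dev Y c) (max (av c * dev X a) (dev X a * dev Y c))"
    using AE_av_le_dev[OF X, of a] AE_av_le_dev[OF Y, of c] by eventually_elim (rule av_mult_sub_le)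
qed

lemma dev_mult_ge_max:
  assumes ind: "indep_var (Kborel av) X (Kborel av) Y"
    and X: "X \<in> Linf M av" and Y: "Y \<in> Linf M av"
    and a: "a \<in> EK M av X" and c: "c \<in> EK M av Y"
  shows "max (av a * dev Y c) (max (av c * dev X a) (dev X a * dev Y c)) \<le> dev (\<lambda>\<omega>. X \<omega> * Y \<omega>) d"
proof -
  have "dev X a * dev Y 0 \<le> dev (\<lambda>\<omega>. X \<omega> * Y \<omega>) d"
    using a by (intro dev_mult_ge[OF ind X Y]) (simp add: EK_iff_minimizer[OF X])
  moreover have "dev Y c * dev X 0 \<le> dev (\<lambda>\<omega>. X \<omega> * Y \<omega>) d"
    using dev_mult_ge[OF indep_var_sym[OF ind] Y X, of "dev Y c" d] c
    by (simp add: EK_iff_minimizer[OF Y] mult.commute)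
  moreover have "av a * dev Y c \<le> dev Y c * max (av a) (dev X a)"
    using mult_right_mono[OF max.cobounded1[of "av a" "dev X a"] dev_nonneg[of Y c]]
    by (simp add: mult.commute)
  moreover have "av c * dev X a \<le> dev X a * max (av c) (dev Y c)"
    using mult_right_mono[OF max.cobounded1[of "av c" "dev Y c"] dev_nonneg[of X a]]
    by (simp add: mult.commute)
  moreover have "dev X a * dev Y c \<le> dev X a * max (av c) (dev Y c)"
    using mult_left_mono[OF max.cobounded2[of "dev Y c" "av c"] dev_nonneg[of X a]] .
  ultimately show ?thesis
    unfolding dev_zero_eq_max[OF X a] dev_zero_eq_max[OF Y c]
    by (intro max.boundedI) (meson order_trans)+
qed

lemma EK_mult_indep:
  assumes ind: "indep_var (Kborel av) X (Kborel av) Y"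
    and X: "X \<in> Linf M av" and Y: "Y \<in> Linf M av"
  shows "EK M av (\<lambda>\<omega>. X \<omega> * Y \<omega>) = {a * c | a c. a \<in> EK M av X \<and> c \<in> EK M av Y}"
proof -
  obtain a where a: "a \<in> EK M av X" "a = 0 \<or> dev X a < av a"
    using ex_EK_zero_or_dev_less[OF X] by blast
  obtain c where c: "c \<in> EK M av Y" "c = 0 \<or> dev Y c < av c"
    using ex_EK_zero_or_dev_less[OF Y] by blast
  have "EK M av (\<lambda>\<omega>. X \<omega> * Y \<omega>)
      = {z. av (z - a * c) \<le> max (av a * dev Y c) (max (av c * dev X a) (dev X a * dev Y c))}"
    by (intro EK_eq_closed_ball[OF Linf_mult[OF X Y]] dev_mult_ge_max[OF ind X Y a(1) c(1)]
        dev_mult_le[OF X Y])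
  then show ?thesis
    using prodset_EK_eq_closed_ball[OF X Y a c] by simp
qed

end

theorem mainTheorem2:
  fixes M :: "'a measure" and av :: "'k::field \<Rightarrow> real"
    and X Y :: "'a \<Rightarrow> 'k" and k b :: 'k
  assumes "prob_space M" and "nonarch_local_field av"
    and "X \<in> Linf M av" and "Y \<in> Linf M av"
  shows "EK M av (\<lambda>\<omega>. k * X \<omega> + b) = (\<lambda>a. k * a + b) ` EK M av X
    \<and> EK M av (\<lambda>\<omega>. X \<omega> + Y \<omega>) \<subseteq> {a + c | a c. a \<in> EK M av X \<and> c \<in> EK M av Y}
    \<and> (prob_space.indep_var M (Kborel av) X (Kborel av) Y \<longrightarrow>
           EK M av (\<lambda>\<omega>. X \<omega> + Y \<omega>) = {a + c | a c. a \<in> EK M av X \<and> c \<in> EK M av Y})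
    \<and> (prob_space.indep_var M (Kborel av) X (Kborel av) Y \<longrightarrow>
           EK M av (\<lambda>\<omega>. X \<omega> * Y \<omega>) = {a * c | a c. a \<in> EK M av X \<and> c \<in> EK M av Y})"
proof -
  interpret local_field_prob M av
    by (intro local_field_prob.intro local_field_av.intro assms(1,2))
  show ?thesis
    using EK_affine[OF assms(3)] EK_add_subset[OF assms(3,4)]
      EK_add_indep[OF _ assms(3,4)] EK_mult_indep[OF _ assms(3,4)] by blast
qed

end
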